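(* Consider EPISODE (described in the context) applied to $f=\frac1N\sum_{i=1}^N f_i$, and suppose: each $f_i$ is twice differentiable with $\|\nabla^2 f_i(x)\|\le L_0+L_1\|\nabla f_i(x)\|$ for all $x$; for all $x$, $\mathbb{E}[\nabla F_i(x;\xi_i)]=\nabla f_i(x)$ and $\|\nabla F_i(x;\xi_i)-\nabla f_i(x)\|\le\sigma$ almost surely ($\xi_i\sim\mathcal{D}_i$); and $\|\nabla f_i(x)\|\le\kappa+\rho\|\nabla f(x)\|$ for all $x,i$, with $\kappa\ge0$, $\rho\ge1$. Fix $C\ge1$ and let $A=1+e^C-\frac{e^C-1}{C}$, $B=\frac{e^C-1}{C}$. Suppose $$2\eta I\big(AL_0+BL_1\kappa+BL_1\rho(\sigma+\gamma/\eta)\big)\le1\quad\text{and}\quad\max\Big\{2\eta I\big(2\sigma+\gamma/\eta\big),\ \gamma I\Big\}\le\frac{C}{L_1}.$$ Then for any round $r$, any $i\in[N]$, and all $x\in\mathbb{R}^d$ with $\|x-\bar{x}_r\|\le 2\eta I(2\sigma+\gamma/\eta)$, almost surely $$\mathbb{1}_{\mathcal{A}_r}\|\nabla^2 f_i(x)\|\le L_0+L_1\big(\kappa+(\rho+1)(\gamma/\eta+2\sigma)\big).$$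
   Context: Here $f_i(x)=\mathbb{E}_{\xi_i\sim\mathcal{D}_i}[F_i(x;\xi_i)]$ and $\|\cdot\|$ is the Euclidean norm (operator norm for matrices). EPISODE with $N$ clients, communication interval $I\ge1$, step size $\eta>0$, clipping parameter $\gamma>0$: let $t_r=rI$ and $\mathcal{I}_r=\{t_r,\dots,t_{r+1}-1\}$; $\bar{x}_0=x_0$. At the start of round $r$, every client sets $x^i_{t_r}=\bar{x}_r$; each client draws a fresh $\tilde\xi^i_r\sim\mathcal{D}_i$, sets $G^i_r=\nabla F_i(\bar{x}_r;\tilde\xi^i_r)$, and $G_r=\frac1N\sum_i G^i_r$. The event $\mathcal{A}_r=\{\|G_r\|\le\gamma/\eta\}$ and $\bar{\mathcal{A}}_r$ is its complement. For $t\in\mathcal{I}_r$, client $i$ draws fresh $\xi^i_t\sim\mathcal{D}_i$, sets $g^i_t=\nabla F_i(x^i_t;\xi^i_t)-G^i_r+G_r$, and updates $x^i_{t+1}=x^i_t-\eta g^i_t$ on $\mathcal{A}_r$, and $x^i_{t+1}=x^i_t-\gamma g^i_t/\|g^i_t\|$ on $\bar{\mathcal{A}}_r$. Then $\bar{x}_{r+1}=\frac1N\sum_i x^i_{t_{r+1}}$. All samples are independent. $\mathbb{1}_E$ denotes the indicator of event $E$. *)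

theory Defs
  imports "HOL-Probability.Probability"
begin

text \<open>Parameters: N clients, interval I, step size eta, clipping gamma,
  stochastic gradient oracle GF i x s (= nabla F_i(x; s)), initial point x0,
  resampled samples xt i r (= tilde xi^i_r) and local samples xs i t (= xi^i_t).\<close>

definition Gavg :: "nat \<Rightarrow> (nat \<Rightarrow> 'v::euclidean_space \<Rightarrow> 's \<Rightarrow> 'v) \<Rightarrow> (nat \<Rightarrow> nat \<Rightarrow> 's) \<Rightarrow> nat \<Rightarrow> 'v \<Rightarrow> 'v"
  where "Gavg N GF xt r xb = (1 / real N) *\<^sub>R (\<Sum>i<N. GF i xb (xt i r))"

text \<open>local iterate x^i_{t_r + k} of client i in round r started from xb = bar x_r\<close>
primrec local_iter :: "nat \<Rightarrow> nat \<Rightarrow> real \<Rightarrow> real \<Rightarrow> (nat \<Rightarrow> 'v::euclidean_space \<Rightarrow> 's \<Rightarrow> 'v)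
    \<Rightarrow> (nat \<Rightarrow> nat \<Rightarrow> 's) \<Rightarrow> (nat \<Rightarrow> nat \<Rightarrow> 's) \<Rightarrow> nat \<Rightarrow> nat \<Rightarrow> 'v \<Rightarrow> nat \<Rightarrow> 'v" where
  "local_iter N I \<eta> \<gamma> GF xt xs r i xb 0 = xb"
| "local_iter N I \<eta> \<gamma> GF xt xs r i xb (Suc k) =
     (let x = local_iter N I \<eta> \<gamma> GF xt xs r i xb k;
          G = Gavg N GF xt r xb;
          g = GF i x (xs i (r * I + k)) - GF i xb (xt i r) + G
      in if norm G \<le> \<gamma> / \<eta> then x - \<eta> *\<^sub>R g else x - (\<gamma> / norm g) *\<^sub>R g)"

primrec xbar :: "nat \<Rightarrow> nat \<Rightarrow> real \<Rightarrow> real \<Rightarrow> (nat \<Rightarrow> 'v::euclidean_space \<Rightarrow> 's \<Rightarrow> 'v) \<Rightarrow> 'v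
    \<Rightarrow> (nat \<Rightarrow> nat \<Rightarrow> 's) \<Rightarrow> (nat \<Rightarrow> nat \<Rightarrow> 's) \<Rightarrow> nat \<Rightarrow> 'v" where
  "xbar N I \<eta> \<gamma> GF x0 xt xs 0 = x0"
| "xbar N I \<eta> \<gamma> GF x0 xt xs (Suc r) =
     (1 / real N) *\<^sub>R (\<Sum>i<N. local_iter N I \<eta> \<gamma> GF xt xs r i (xbar N I \<eta> \<gamma> GF x0 xt xs r) I)"

definition event_A :: "'a measure \<Rightarrow> nat \<Rightarrow> nat \<Rightarrow> real \<Rightarrow> real \<Rightarrow> (nat \<Rightarrow> 'v::euclidean_space \<Rightarrow> 's \<Rightarrow> 'v) \<Rightarrow> 'v
    \<Rightarrow> (nat \<Rightarrow> nat \<Rightarrow> 'a \<Rightarrow> 's) \<Rightarrow> (nat \<Rightarrow> nat \<Rightarrow> 'a \<Rightarrow> 's) \<Rightarrow> nat \<Rightarrow> 'a set" where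
  "event_A M N I \<eta> \<gamma> GF x0 \<xi>t \<xi> r =
     {\<omega> \<in> space M. norm (Gavg N GF (\<lambda>i r. \<xi>t i r \<omega>) r
        (xbar N I \<eta> \<gamma> GF x0 (\<lambda>i r. \<xi>t i r \<omega>) (\<lambda>i t. \<xi> i t \<omega>) r)) \<le> \<gamma> / \<eta>}"

text \<open>client index of a sample label: Inl (i,r) = tilde xi^i_r, Inr (i,t) = xi^i_t\<close>
fun sample_client :: "(nat \<times> nat) + (nat \<times> nat) \<Rightarrow> nat" where
  "sample_client (Inl (i, _)) = i"
| "sample_client (Inr (i, _)) = i"

fun sample_var :: "(nat \<Rightarrow> nat \<Rightarrow> 'a \<Rightarrow> 's) \<Rightarrow> (nat \<Rightarrow> nat \<Rightarrow> 'a \<Rightarrow> 's) \<Rightarrow> (nat \<times> nat) + (nat \<times> nat) \<Rightarrow> 'a \<Rightarrow> 's" where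
  "sample_var \<xi>t \<xi> (Inl (i, r)) = \<xi>t i r"
| "sample_var \<xi>t \<xi> (Inr (i, t)) = \<xi> i t"

end

theory Submission
  imports Defs
begin

text \<open>On A_r the averaged stochastic gradient G_r has norm at most gamma/eta. The fresh samples
  of round r are independent of the earlier samples, which determine the averaged iterate bar x_r,
  so almost surely each of them is within sigma of the true gradient at bar x_r. Hence
  norm (grad f (bar x_r)) \<le> gamma/eta + sigma and, by heterogeneity,
  norm (grad f_i (bar x_r)) \<le> kappa + rho (gamma/eta + sigma). Along a segment of length d with
  L1 d \<le> C, (L0,L1)-smoothness and Gronwall's inequality let norm (grad f_i) grow by at most
  (L0 + L1 norm (grad f_i (bar x_r))) d (e^C - 1)/C, which the step-size conditions bound by
  gamma/eta + 2 sigma for d \<le> 2 eta I (2 sigma + gamma/eta); smoothness then bounds the Hessian.\<close>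

lemma has_real_derivative_smoothed_norm:
  fixes h :: "real \<Rightarrow> 'v::real_inner"
  assumes h: "(h has_vector_derivative h') (at t)" and \<delta>: "\<delta> > 0"
  shows "((\<lambda>t. sqrt ((norm (h t))^2 + \<delta>^2)) has_real_derivative
           (h t \<bullet> h') / sqrt ((norm (h t))^2 + \<delta>^2)) (at t)"
proof -
  have "((\<lambda>t. h t \<bullet> h t) has_derivative (\<lambda>s. h t \<bullet> (s *\<^sub>R h') + (s *\<^sub>R h') \<bullet> h t)) (at t)"
    using h unfolding has_vector_derivative_def by (intro has_derivative_inner) auto
  then have "((\<lambda>t. (norm (h t))^2) has_real_derivative 2 * (h t \<bullet> h')) (at t)"
    unfolding has_field_derivative_def power2_norm_eq_inner
    by (rule has_derivative_eq_rhs) (auto simp: fun_eq_iff inner_commute algebra_simps)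
  then have "((\<lambda>t. (norm (h t))^2 + \<delta>^2) has_real_derivative 2 * (h t \<bullet> h') + 0) (at t)"
    by (rule DERIV_add) (rule DERIV_const)
  from DERIV_chain2[OF DERIV_real_sqrt this] \<delta> show ?thesis
    by (simp add: divide_simps add_nonneg_pos)
qed

text \<open>The norm is not differentiable at 0, so the Gronwall argument is run on the smoothed
  norm sqrt(norm (h t)^2 + delta^2), with delta tending to 0 in the end.\<close>

lemma gronwall_norm_bound:
  fixes h h' :: "real \<Rightarrow> 'v::real_inner"
  assumes h: "\<And>t. (h has_vector_derivative h' t) (at t)"
    and bound: "\<And>t. 0 \<le> t \<Longrightarrow> t \<le> 1 \<Longrightarrow> norm (h' t) \<le> k * (norm (h t) + c)"
    and k: "k \<ge> 0" and c: "c \<ge> 0"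
  shows "norm (h 1) \<le> (norm (h 0) + c) * exp k - c"
proof (rule field_le_epsilon)
  fix e :: real assume e: "e > 0"
  define \<delta> where "\<delta> = e / exp k"
  have \<delta>: "\<delta> > 0" using e by (simp add: \<delta>_def)
  define z where "z t = sqrt ((norm (h t))^2 + \<delta>^2)" for t
  have z_pos: "z t > 0" for t
    unfolding z_def using \<delta> by (simp add: add_nonneg_pos)
  have norm_le_z: "norm (h t) \<le> z t" for t
    unfolding z_def by (rule real_le_rsqrt) simp
  have z0: "z 0 \<le> norm (h 0) + \<delta>"
    unfolding z_def using \<delta> by (intro real_le_lsqrt) (auto simp: power2_sum)
  have "exp (-k*1) * (z 1 + c) \<le> exp (-k*0) * (z 0 + c)"
  proof (rule DERIV_nonpos_imp_nonincreasing[where f = "\<lambda>t. exp (-k*t) * (z t + c)"])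
    fix t :: real assume t: "0 \<le> t" "t \<le> 1"
    have "h t \<bullet> h' t \<le> z t * norm (h' t)"
      using norm_cauchy_schwarz[of "h t" "h' t"] norm_le_z[of t]
      by (meson mult_right_mono norm_ge_zero order_trans)
    then have "(h t \<bullet> h' t) / z t \<le> norm (h' t)"
      using z_pos[of t] by (simp add: divide_simps mult.commute)
    also have "\<dots> \<le> k * (z t + c)"
      using bound[OF t] norm_le_z[of t] k by (meson add_right_mono mult_left_mono order_trans)
    finally have "exp (-k*t) * ((h t \<bullet> h' t) / z t) \<le> exp (-k*t) * (k * (z t + c))"
      by (intro mult_left_mono) auto
    then have "exp (-k*t) * ((h t \<bullet> h' t) / z t) + (- k * exp (-k*t)) * (z t + c) \<le> 0"
      by (simp add: algebra_simps)
    moreover have "((\<lambda>t. exp (-k*t) * (z t + c)) has_real_derivative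
        exp (-k*t) * ((h t \<bullet> h' t) / z t) + (- k * exp (-k*t)) * (z t + c)) (at t)"
      unfolding z_def
      by (rule derivative_eq_intros has_real_derivative_smoothed_norm[OF h \<delta>] refl | simp)+
    ultimately show "\<exists>y. ((\<lambda>t. exp (-k*t) * (z t + c)) has_real_derivative y) (at t) \<and> y \<le> 0"
      by blast
  qed simp
  then have "z 1 + c \<le> (z 0 + c) * exp k"
    by (simp add: exp_minus field_simps)
  also have "\<dots> \<le> (norm (h 0) + \<delta> + c) * exp k" using z0 by simp
  also have "\<dots> = (norm (h 0) + c) * exp k + e" by (simp add: \<delta>_def algebra_simps)
  finally show "norm (h 1) \<le> (norm (h 0) + c) * exp k - c + e" using norm_le_z[of 1] by simp
qed

lemma exp_minus_one_le_chord:
  fixes k C :: real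
  assumes "0 \<le> k" "k \<le> C" "C > 0"
  shows "exp k - 1 \<le> k * ((exp C - 1) / C)"
proof -
  have "exp ((1 - k/C) *\<^sub>R 0 + (k/C) *\<^sub>R C) \<le> (1 - k/C) * exp 0 + (k/C) * exp C"
    using assms by (intro convex_onD[OF exp_convex]) auto
  then have "C * (k + C * exp k) \<le> C * (C + k * exp C)" using assms by (simp add: field_simps)
  then have "k + C * exp k \<le> C + k * exp C" using assms(3) by simp
  then show ?thesis using assms by (simp add: field_simps)
qed

lemma two_mult_exp_minus_one_le:
  fixes C :: real
  assumes C: "C \<ge> 0"
  shows "2 * (exp C - 1) \<le> C * (exp C + 1)"
proof -
  let ?f = "\<lambda>x::real. x * (exp x + 1) - 2 * (exp x - 1)"
  have "?f 0 \<le> ?f C"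
  proof (rule DERIV_nonneg_imp_nondecreasing[OF C])
    fix x :: real assume x: "0 \<le> x" "x \<le> C"
    have "(1 - x) * exp x \<le> exp (-x) * exp x"
      using exp_ge_add_one_self[of "-x"] by (intro mult_right_mono) auto
    then have "0 \<le> 1 * (exp x + 1) + x * exp x - 2 * exp x"
      by (simp add: exp_minus algebra_simps)
    moreover have "(?f has_real_derivative 1 * (exp x + 1) + x * exp x - 2 * exp x) (at x)"
      by (rule derivative_eq_intros refl | simp)+
    ultimately show "\<exists>y. (?f has_real_derivative y) (at x) \<and> 0 \<le> y"
      by blast
  qed
  then show ?thesis by simp
qed

lemma norm_gradient_growth:
  fixes g :: "'v::euclidean_space \<Rightarrow> 'v" and H :: "'v \<Rightarrow> 'v \<Rightarrow> 'v"
  assumes hess: "\<And>x. (g has_derivative H x) (at x)"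
    and smooth: "\<And>x. onorm (H x) \<le> L0 + L1 * norm (g x)"
    and L0: "L0 \<ge> 0" and L1: "L1 > 0" and C: "C > 0"
    and dist: "L1 * norm (x - y) \<le> C"
  shows "norm (g x) \<le> norm (g y) + (L0 + L1 * norm (g y)) * norm (x - y) * ((exp C - 1) / C)"
proof -
  define u where "u = x - y"
  define p where "p t = y + t *\<^sub>R u" for t :: real
  have H_linear: "bounded_linear (H z)" for z
    using hess has_derivative_bounded_linear by blast
  have h: "((g \<circ> p) has_vector_derivative H (p t) u) (at t)" for t
  proof -
    have "(p has_derivative (\<lambda>s. s *\<^sub>R u)) (at t)"
      unfolding p_def by (auto intro!: derivative_eq_intros)
    from diff_chain_at[OF this hess] show ?thesis
      unfolding has_vector_derivative_def
      by (simp add: o_def linear_cmul bounded_linear.linear[OF H_linear])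
  qed
  have bound: "norm (H (p t) u) \<le> (L1 * norm u) * (norm ((g \<circ> p) t) + L0 / L1)" for t
  proof -
    have "norm (H (p t) u) \<le> onorm (H (p t)) * norm u" by (rule onorm[OF H_linear])
    also have "\<dots> \<le> (L0 + L1 * norm (g (p t))) * norm u"
      by (intro mult_right_mono smooth) auto
    also have "\<dots> = (L1 * norm u) * (norm ((g \<circ> p) t) + L0 / L1)"
      using L1 by (simp add: field_simps)
    finally show ?thesis .
  qed
  have "norm ((g \<circ> p) 1) \<le> (norm ((g \<circ> p) 0) + L0 / L1) * exp (L1 * norm u) - L0 / L1"
    by (rule gronwall_norm_bound[OF h bound]) (use L0 L1 in auto)
  also have "\<dots> = norm (g y) + (norm (g y) + L0 / L1) * (exp (L1 * norm u) - 1)"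
    by (simp add: p_def algebra_simps)
  also have "\<dots> \<le> norm (g y) + (norm (g y) + L0 / L1) * ((L1 * norm u) * ((exp C - 1) / C))"
    using L0 L1 dist C unfolding u_def
    by (intro add_left_mono mult_left_mono exp_minus_one_le_chord) auto
  also have "\<dots> = norm (g y) + (L0 + L1 * norm (g y)) * norm u * ((exp C - 1) / C)"
    using L1 C by (simp add: field_simps)
  finally show ?thesis by (simp add: p_def u_def)
qed

lemma norm_mean_le_norm_mean_add:
  fixes a b :: "nat \<Rightarrow> 'v::real_normed_vector"
  assumes N: "N > 0" and close: "\<And>j. j < N \<Longrightarrow> norm (a j - b j) \<le> \<sigma>"
  shows "norm ((1 / real N) *\<^sub>R (\<Sum>j<N. b j)) \<le> norm ((1 / real N) *\<^sub>R (\<Sum>j<N. a j)) + \<sigma>"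
proof -
  have "norm (\<Sum>j<N. a j - b j) \<le> (\<Sum>j<N. \<sigma>)"
    using close by (intro order_trans[OF norm_sum] sum_mono) auto
  then have "norm ((1 / real N) *\<^sub>R (\<Sum>j<N. a j - b j)) \<le> \<sigma>"
    using N by (simp add: divide_simps mult.commute)
  moreover have "(1 / real N) *\<^sub>R (\<Sum>j<N. b j)
      = (1 / real N) *\<^sub>R (\<Sum>j<N. a j) - (1 / real N) *\<^sub>R (\<Sum>j<N. a j - b j)"
    by (simp add: sum_subtractf algebra_simps)
  ultimately show ?thesis
    using norm_triangle_ineq4[of "(1 / real N) *\<^sub>R (\<Sum>j<N. a j)" "(1 / real N) *\<^sub>R (\<Sum>j<N. a j - b j)"]
    by simp
qed

lemma hessian_bound_near_center:
  fixes g :: "'v::euclidean_space \<Rightarrow> 'v" and H :: "'v \<Rightarrow> 'v \<Rightarrow> 'v"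
  assumes hess: "\<And>x. (g has_derivative H x) (at x)"
    and smooth: "\<And>x. onorm (H x) \<le> L0 + L1 * norm (g x)"
    and L0: "L0 \<ge> 0" and L1: "L1 > 0" and C: "C > 0"
    and eta: "\<eta> > 0" and gamma: "\<gamma> \<ge> 0" and sigma: "\<sigma> \<ge> 0" and rho: "\<rho> \<ge> 0"
    and center: "norm (g y) \<le> \<kappa> + \<rho> * (\<gamma> / \<eta> + \<sigma>)"
    and step: "2 * \<eta> * real I * ((1 + exp C - (exp C - 1) / C) * L0 + ((exp C - 1) / C) * L1 * \<kappa>
        + ((exp C - 1) / C) * L1 * \<rho> * (\<sigma> + \<gamma> / \<eta>)) \<le> 1"
    and radius: "L1 * (2 * \<eta> * real I * (2 * \<sigma> + \<gamma> / \<eta>)) \<le> C"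
    and x: "norm (x - y) \<le> 2 * \<eta> * real I * (2 * \<sigma> + \<gamma> / \<eta>)"
  shows "onorm (H x) \<le> L0 + L1 * (\<kappa> + (\<rho> + 1) * (\<gamma> / \<eta> + 2 * \<sigma>))"
proof -
  define G where "G = \<kappa> + \<rho> * (\<gamma> / \<eta> + \<sigma>)"
  define B where "B = (exp C - 1) / C"
  define \<delta> where "\<delta> = 2 * \<eta> * real I * (2 * \<sigma> + \<gamma> / \<eta>)"
  have G: "0 \<le> G" using center norm_ge_zero[of "g y"] unfolding G_def by linarith
  have B: "0 \<le> B" using C unfolding B_def by simp
  have "2 * B \<le> 1 + exp C"
    using two_mult_exp_minus_one_le[of C] C unfolding B_def by (simp add: field_simps)
  then have B_le: "B \<le> 1 + exp C - B" by simp
  have increment: "(L0 + L1 * G) * \<delta> * B \<le> 2 * \<sigma> + \<gamma> / \<eta>"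
  proof -
    have "B * L0 \<le> (1 + exp C - B) * L0" using B_le L0 by (rule mult_right_mono)
    then have "2 * \<eta> * real I * (B * (L0 + L1 * G)) \<le>
        2 * \<eta> * real I * ((1 + exp C - B) * L0 + B * L1 * \<kappa> + B * L1 * \<rho> * (\<sigma> + \<gamma> / \<eta>))"
      using eta by (intro mult_left_mono) (auto simp: G_def algebra_simps)
    then have "2 * \<eta> * real I * (B * (L0 + L1 * G)) \<le> 1"
      using step unfolding B_def by linarith
    then have "(2 * \<eta> * real I * (B * (L0 + L1 * G))) * (2 * \<sigma> + \<gamma> / \<eta>) \<le> 2 * \<sigma> + \<gamma> / \<eta>"
      using sigma eta gamma B G L0 L1 by (intro mult_left_le_one_le) auto
    then show ?thesis unfolding \<delta>_def by (simp add: algebra_simps)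
  qed
  have "L1 * norm (x - y) \<le> C"
    using x radius L1 by (meson mult_left_mono less_imp_le order_trans)
  then have "norm (g x) \<le> norm (g y) + (L0 + L1 * norm (g y)) * norm (x - y) * B"
    unfolding B_def by (rule norm_gradient_growth[OF hess smooth L0 L1 C])
  also have "\<dots> \<le> G + (L0 + L1 * G) * \<delta> * B"
    using center x L0 L1 B G unfolding G_def \<delta>_def
    by (intro add_mono mult_right_mono mult_mono) auto
  also have "\<dots> \<le> G + (2 * \<sigma> + \<gamma> / \<eta>)"
    using increment by simp
  also have "\<dots> \<le> \<kappa> + (\<rho> + 1) * (\<gamma> / \<eta> + 2 * \<sigma>)"
    using mult_nonneg_nonneg[OF rho sigma] unfolding G_def by (simp add: algebra_simps add_divide_distrib)
  finally have "L1 * norm (g x) \<le> L1 * (\<kappa> + (\<rho> + 1) * (\<gamma> / \<eta> + 2 * \<sigma>))"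
    using L1 by simp
  then show ?thesis
    using smooth[of x] by linarith
qed

lemma local_iter_cong:
  assumes "\<And>i'. i' < N \<Longrightarrow> xt i' r = xt' i' r" and "i < N"
    and "\<And>k'. k' < k \<Longrightarrow> xs i (r * I + k') = xs' i (r * I + k')"
  shows "local_iter N I \<eta> \<gamma> GF xt xs r i xb k = local_iter N I \<eta> \<gamma> GF xt' xs' r i xb k"
  using assms(3)
proof (induction k)
  case 0
  then show ?case by simp
next
  case (Suc k)
  have "Gavg N GF xt r xb = Gavg N GF xt' r xb"
    using assms(1) by (simp add: Gavg_def)
  then show ?case
    using Suc assms(1,2) by (simp add: Let_def)
qed

lemma xbar_cong:
  assumes "\<And>i r'. i < N \<Longrightarrow> r' < r \<Longrightarrow> xt i r' = xt' i r'"
    and "\<And>i t. i < N \<Longrightarrow> t < r * I \<Longrightarrow> xs i t = xs' i t"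
  shows "xbar N I \<eta> \<gamma> GF x0 xt xs r = xbar N I \<eta> \<gamma> GF x0 xt' xs' r"
  using assms
proof (induction r)
  case 0
  then show ?case by simp
next
  case (Suc r)
  have IH: "xbar N I \<eta> \<gamma> GF x0 xt xs r = xbar N I \<eta> \<gamma> GF x0 xt' xs' r"
    using Suc.prems by (intro Suc.IH) (auto intro: order_less_le_trans)
  show ?case
    unfolding xbar.simps IH
    by (intro arg_cong[where f="\<lambda>x. _ *\<^sub>R x"] sum.cong refl local_iter_cong) (auto intro!: Suc.prems)
qed

lemma measurable_local_iter:
  fixes GF :: "nat \<Rightarrow> 'v::euclidean_space \<Rightarrow> 's \<Rightarrow> 'v"
  assumes GF: "\<And>i. i < N \<Longrightarrow> (\<lambda>(x, s). GF i x s) \<in> borel_measurable (borel \<Otimes>\<^sub>M D i)"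
    and xt: "\<And>i'. i' < N \<Longrightarrow> xt i' r \<in> \<Omega> \<rightarrow>\<^sub>M D i'" and i: "i < N"
    and xs: "\<And>k'. k' < k \<Longrightarrow> xs i (r * I + k') \<in> \<Omega> \<rightarrow>\<^sub>M D i"
    and xb: "xb \<in> borel_measurable \<Omega>"
  shows "(\<lambda>\<omega>. local_iter N I \<eta> \<gamma> GF (\<lambda>i r. xt i r \<omega>) (\<lambda>i t. xs i t \<omega>) r i (xb \<omega>) k)
    \<in> borel_measurable \<Omega>"
  using xs
proof (induction k)
  case 0
  then show ?case using xb by simp
next
  case (Suc k)
  have x[measurable]: "(\<lambda>\<omega>. local_iter N I \<eta> \<gamma> GF (\<lambda>i r. xt i r \<omega>) (\<lambda>i t. xs i t \<omega>) r i (xb \<omega>) k)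
      \<in> borel_measurable \<Omega>"
    using Suc by auto
  have G[measurable]: "(\<lambda>\<omega>. Gavg N GF (\<lambda>i r. xt i r \<omega>) r (xb \<omega>)) \<in> borel_measurable \<Omega>"
    unfolding Gavg_def
    by (intro borel_measurable_scaleR borel_measurable_const borel_measurable_sum
        measurable_Pair_compose_split[OF GF xb xt]) auto
  have g[measurable]: "(\<lambda>\<omega>. GF i (local_iter N I \<eta> \<gamma> GF (\<lambda>i r. xt i r \<omega>) (\<lambda>i t. xs i t \<omega>) r i (xb \<omega>) k)
      (xs i (r * I + k) \<omega>) - GF i (xb \<omega>) (xt i r \<omega>) + Gavg N GF (\<lambda>i r. xt i r \<omega>) r (xb \<omega>))
      \<in> borel_measurable \<Omega>"
    by (intro borel_measurable_add borel_measurable_diff G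
        measurable_Pair_compose_split[OF GF[OF i]] x xb xt[OF i] Suc.prems) auto
  show ?case
    by (simp add: Let_def) measurable
qed

lemma measurable_xbar:
  fixes GF :: "nat \<Rightarrow> 'v::euclidean_space \<Rightarrow> 's \<Rightarrow> 'v"
  assumes GF: "\<And>i. i < N \<Longrightarrow> (\<lambda>(x, s). GF i x s) \<in> borel_measurable (borel \<Otimes>\<^sub>M D i)"
    and xt: "\<And>i r'. i < N \<Longrightarrow> r' < r \<Longrightarrow> xt i r' \<in> \<Omega> \<rightarrow>\<^sub>M D i"
    and xs: "\<And>i t. i < N \<Longrightarrow> t < r * I \<Longrightarrow> xs i t \<in> \<Omega> \<rightarrow>\<^sub>M D i"
  shows "(\<lambda>\<omega>. xbar N I \<eta> \<gamma> GF x0 (\<lambda>i r. xt i r \<omega>) (\<lambda>i t. xs i t \<omega>) r) \<in> borel_measurable \<Omega>"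
  using xt xs
proof (induction r)
  case 0
  then show ?case by simp
next
  case (Suc r)
  have "(\<lambda>\<omega>. xbar N I \<eta> \<gamma> GF x0 (\<lambda>i r. xt i r \<omega>) (\<lambda>i t. xs i t \<omega>) r) \<in> borel_measurable \<Omega>"
    using Suc.prems by (intro Suc.IH) (auto intro: order_less_le_trans)
  then show ?case
    unfolding xbar.simps
    by (intro borel_measurable_scaleR borel_measurable_const borel_measurable_sum
        measurable_local_iter[where D=D, OF GF] Suc.prems) auto
qed

text \<open>The labels of the samples generating the paper's sigma-algebra F_r of the history before
  round r.\<close>

definition past_samples :: "nat \<Rightarrow> nat \<Rightarrow> nat \<Rightarrow> ((nat \<times> nat) + (nat \<times> nat)) set" where
  "past_samples N I r =
     {Inl (i, r') | i r'. i < N \<and> r' < r} \<union> {Inr (i, t) | i t. i < N \<and> t < r * I}"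

definition xbar_of_samples :: "nat \<Rightarrow> nat \<Rightarrow> real \<Rightarrow> real \<Rightarrow> (nat \<Rightarrow> 'v::euclidean_space \<Rightarrow> 's \<Rightarrow> 'v)
    \<Rightarrow> 'v \<Rightarrow> nat \<Rightarrow> ((nat \<times> nat) + (nat \<times> nat) \<Rightarrow> 's) \<Rightarrow> 'v" where
  "xbar_of_samples N I \<eta> \<gamma> GF x0 r f =
     xbar N I \<eta> \<gamma> GF x0 (\<lambda>i r. f (Inl (i, r))) (\<lambda>i t. f (Inr (i, t))) r"

lemma xbar_eq_xbar_of_past_samples:
  "xbar N I \<eta> \<gamma> GF x0 (\<lambda>i r. \<xi>t i r \<omega>) (\<lambda>i t. \<xi> i t \<omega>) r =
     xbar_of_samples N I \<eta> \<gamma> GF x0 r (restrict (\<lambda>k. sample_var \<xi>t \<xi> k \<omega>) (past_samples N I r))"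
  unfolding xbar_of_samples_def by (rule xbar_cong) (auto simp: past_samples_def)

lemma measurable_xbar_of_samples:
  fixes GF :: "nat \<Rightarrow> 'v::euclidean_space \<Rightarrow> 's \<Rightarrow> 'v"
  assumes GF: "\<And>i. i < N \<Longrightarrow> (\<lambda>(x, s). GF i x s) \<in> borel_measurable (borel \<Otimes>\<^sub>M D i)"
  shows "xbar_of_samples N I \<eta> \<gamma> GF x0 r
    \<in> borel_measurable (PiM (past_samples N I r) (\<lambda>k. D (sample_client k)))"
proof -
  have "(\<lambda>f. f (Inl (i, r'))) \<in> PiM (past_samples N I r) (\<lambda>k. D (sample_client k)) \<rightarrow>\<^sub>M D i"
    if "i < N" "r' < r" for i r'
  proof -
    have "Inl (i, r') \<in> past_samples N I r" using that by (auto simp: past_samples_def)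
    from measurable_component_singleton[OF this, of "\<lambda>k. D (sample_client k)"] show ?thesis by simp
  qed
  moreover have "(\<lambda>f. f (Inr (i, t))) \<in> PiM (past_samples N I r) (\<lambda>k. D (sample_client k)) \<rightarrow>\<^sub>M D i"
    if "i < N" "t < r * I" for i t
  proof -
    have "Inr (i, t) \<in> past_samples N I r" using that by (auto simp: past_samples_def)
    from measurable_component_singleton[OF this, of "\<lambda>k. D (sample_client k)"] show ?thesis by simp
  qed
  ultimately show ?thesis
    unfolding xbar_of_samples_def by (intro measurable_xbar[where D=D, OF GF]) auto
qed

lemma (in prob_space) AE_indep_var_fiberwise:
  assumes indep: "indep_var S Z T Y"
    and P: "Measurable.pred (S \<Otimes>\<^sub>M T) (\<lambda>(z, y). P z y)"
    and fiber: "\<And>z. z \<in> space S \<Longrightarrow> AE \<omega> in M. P z (Y \<omega>)"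
  shows "AE \<omega> in M. P (Z \<omega>) (Y \<omega>)"
proof -
  from indep have Z: "random_variable S Z" and Y: "random_variable T Y"
    and joint: "distr M S Z \<Otimes>\<^sub>M distr M T Y = distr M (S \<Otimes>\<^sub>M T) (\<lambda>\<omega>. (Z \<omega>, Y \<omega>))"
    unfolding indep_var_distribution_eq by auto
  interpret ZY: pair_sigma_finite "distr M S Z" "distr M T Y"
    using prob_space_distr[OF Z] prob_space_distr[OF Y]
    by (auto simp: pair_sigma_finite_def intro: prob_space_imp_sigma_finite)
  have "AE z in distr M S Z \<Otimes>\<^sub>M distr M T Y. P (fst z) (snd z)"
  proof (rule ZY.AE_pair_measure)
    show "{z \<in> space (distr M S Z \<Otimes>\<^sub>M distr M T Y). P (fst z) (snd z)}
        \<in> sets (distr M S Z \<Otimes>\<^sub>M distr M T Y)"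
      using P by (simp add: space_pair_measure case_prod_beta cong: sets_pair_measure_cong)
    show "AE z in distr M S Z. AE y in distr M T Y. P (fst (z, y)) (snd (z, y))"
    proof (rule AE_I2)
      fix z assume "z \<in> space (distr M S Z)"
      then have z: "z \<in> space S" by simp
      have "Measurable.pred T (P z)"
        using measurable_Pair_compose_split[OF P measurable_const[OF z] measurable_ident] by (simp add: id_def)
      then show "AE y in distr M T Y. P (fst (z, y)) (snd (z, y))"
        using fiber[OF z] by (simp add: AE_distr_iff[OF Y])
    qed
  qed
  then have "AE z in distr M (S \<Otimes>\<^sub>M T) (\<lambda>\<omega>. (Z \<omega>, Y \<omega>)). P (fst z) (snd z)"
    unfolding joint .
  then show ?thesis
    using P by (subst (asm) AE_distr_iff) (auto simp: case_prod_beta intro: measurable_Pair Z Y)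
qed

lemma (in prob_space) AE_fresh_sample_at_xbar:
  fixes GF :: "nat \<Rightarrow> 'v::euclidean_space \<Rightarrow> 's \<Rightarrow> 'v"
  assumes GF: "\<And>i. i < N \<Longrightarrow> (\<lambda>(x, s). GF i x s) \<in> borel_measurable (borel \<Otimes>\<^sub>M D i)"
    and indep: "indep_vars (\<lambda>k. D (sample_client k)) (sample_var \<xi>t \<xi>) {k. sample_client k < N}"
    and j: "j < N" and fresh: "distr M (D j) (\<xi>t j r) = D j"
    and P: "Measurable.pred (borel \<Otimes>\<^sub>M D j) (\<lambda>(x, s). P x s)"
    and fixed_point: "\<And>x. AE s in D j. P x s"
  shows "AE \<omega> in M. P (xbar N I \<eta> \<gamma> GF x0 (\<lambda>i r. \<xi>t i r \<omega>) (\<lambda>i t. \<xi> i t \<omega>) r) (\<xi>t j r \<omega>)"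
proof -
  let ?M = "\<lambda>k. D (sample_client k)"
  let ?restrict = "\<lambda>J \<omega>. restrict (\<lambda>k. sample_var \<xi>t \<xi> k \<omega>) J"
  let ?F = "xbar_of_samples N I \<eta> \<gamma> GF x0 r"
  have indep_past: "indep_var (PiM (past_samples N I r) ?M) (?restrict (past_samples N I r))
      (PiM {Inl (j, r)} ?M) (?restrict {Inl (j, r)})"
    using j by (intro indep_var_restrict[OF indep]) (auto simp: past_samples_def)
  have "\<forall>k. sample_client k < N \<longrightarrow> random_variable (D (sample_client k)) (sample_var \<xi>t \<xi> k)"
    using indep unfolding indep_vars_def by simp
  from this[rule_format, of "Inl (j, r)"] j have \<xi>t: "random_variable (D j) (\<xi>t j r)" by simp
  have "AE \<omega> in M. P (?F (?restrict (past_samples N I r) \<omega>)) (?restrict {Inl (j, r)} \<omega> (Inl (j, r)))"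
  proof (rule AE_indep_var_fiberwise[OF indep_past])
    have [measurable]: "?F \<in> borel_measurable (PiM (past_samples N I r) ?M)"
      by (rule measurable_xbar_of_samples[OF GF])
    have [measurable]: "(\<lambda>g. g (Inl (j, r))) \<in> PiM {Inl (j, r)} ?M \<rightarrow>\<^sub>M D j"
      using measurable_component_singleton[of "Inl (j, r)" "{Inl (j, r)}" ?M] by simp
    note P[measurable]
    show "Measurable.pred (PiM (past_samples N I r) ?M \<Otimes>\<^sub>M PiM {Inl (j, r)} ?M)
        (\<lambda>(f, g). P (?F f) (g (Inl (j, r))))"
      by measurable
    fix f
    have "Measurable.pred (D j) (P (?F f))"
      using measurable_Pair_compose_split[OF P measurable_const measurable_ident] by (simp add: id_def)
    moreover have "AE s in distr M (D j) (\<xi>t j r). P (?F f) s"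
      unfolding fresh by (rule fixed_point)
    ultimately have "AE \<omega> in M. P (?F f) (\<xi>t j r \<omega>)"
      by (simp add: AE_distr_iff[OF \<xi>t])
    then show "AE \<omega> in M. P (?F f) (?restrict {Inl (j, r)} \<omega> (Inl (j, r)))"
      by simp
  qed
  then show ?thesis
    by (simp add: xbar_eq_xbar_of_past_samples)
qed

lemma (in prob_space) AE_noise_bound_at_xbar:
  fixes GF :: "nat \<Rightarrow> 'v::euclidean_space \<Rightarrow> 's \<Rightarrow> 'v" and g :: "nat \<Rightarrow> 'v \<Rightarrow> 'v"
  assumes GF: "\<And>i. i < N \<Longrightarrow> (\<lambda>(x, s). GF i x s) \<in> borel_measurable (borel \<Otimes>\<^sub>M D i)"
    and indep: "indep_vars (\<lambda>k. D (sample_client k)) (sample_var \<xi>t \<xi>) {k. sample_client k < N}"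
    and fresh: "\<And>j. j < N \<Longrightarrow> distr M (D j) (\<xi>t j r) = D j"
    and g: "\<And>j. j < N \<Longrightarrow> continuous_on UNIV (g j)"
    and noise: "\<And>j x. j < N \<Longrightarrow> AE s in D j. norm (GF j x s - g j x) \<le> \<sigma>"
  shows "AE \<omega> in M. \<forall>j<N.
    norm (GF j (xbar N I \<eta> \<gamma> GF x0 (\<lambda>i r. \<xi>t i r \<omega>) (\<lambda>i t. \<xi> i t \<omega>) r) (\<xi>t j r \<omega>)
      - g j (xbar N I \<eta> \<gamma> GF x0 (\<lambda>i r. \<xi>t i r \<omega>) (\<lambda>i t. \<xi> i t \<omega>) r)) \<le> \<sigma>"
proof -
  have "AE \<omega> in M. \<forall>j\<in>{..<N}.
    norm (GF j (xbar N I \<eta> \<gamma> GF x0 (\<lambda>i r. \<xi>t i r \<omega>) (\<lambda>i t. \<xi> i t \<omega>) r) (\<xi>t j r \<omega>)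
      - g j (xbar N I \<eta> \<gamma> GF x0 (\<lambda>i r. \<xi>t i r \<omega>) (\<lambda>i t. \<xi> i t \<omega>) r)) \<le> \<sigma>"
  proof (rule AE_finite_allI)
    fix j assume "j \<in> {..<N}"
    then have j: "j < N" by simp
    have [measurable]: "g j \<in> borel_measurable borel"
      using g[OF j] by (rule borel_measurable_continuous_onI)
    have [measurable]: "(\<lambda>(x, s). GF j x s) \<in> borel_measurable (borel \<Otimes>\<^sub>M D j)"
      by (rule GF[OF j])
    have "Measurable.pred (borel \<Otimes>\<^sub>M D j) (\<lambda>(x, s). norm (GF j x s - g j x) \<le> \<sigma>)"
      by measurable
    from AE_fresh_sample_at_xbar[OF GF indep j fresh[OF j] this noise[OF j]]
    show "AE \<omega> in M.
      norm (GF j (xbar N I \<eta> \<gamma> GF x0 (\<lambda>i r. \<xi>t i r \<omega>) (\<lambda>i t. \<xi> i t \<omega>) r) (\<xi>t j r \<omega>)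
        - g j (xbar N I \<eta> \<gamma> GF x0 (\<lambda>i r. \<xi>t i r \<omega>) (\<lambda>i t. \<xi> i t \<omega>) r)) \<le> \<sigma>" .
  qed simp
  then show ?thesis by (rule eventually_mono) simp
qed

theorem lemma2:
  fixes M :: "'a measure"
    and D :: "nat \<Rightarrow> 's measure"
    and N I :: nat
    and \<eta> \<gamma> \<sigma> L0 L1 \<kappa> \<rho> C :: real
    and fi :: "nat \<Rightarrow> 'v::euclidean_space \<Rightarrow> real"
    and gi :: "nat \<Rightarrow> 'v \<Rightarrow> 'v"
    and Hi :: "nat \<Rightarrow> 'v \<Rightarrow> 'v \<Rightarrow> 'v"
    and GF :: "nat \<Rightarrow> 'v \<Rightarrow> 's \<Rightarrow> 'v"
    and x0 :: 'v
    and \<xi>t \<xi> :: "nat \<Rightarrow> nat \<Rightarrow> 'a \<Rightarrow> 's"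
  assumes M: "prob_space M"
    and N: "N \<ge> 1" and I: "I \<ge> 1" and eta: "\<eta> > 0" and gamma: "\<gamma> > 0"
    and L0: "L0 \<ge> 0" and L1: "L1 > 0" and sigma: "\<sigma> \<ge> 0"
    and kappa: "\<kappa> \<ge> 0" and rho: "\<rho> \<ge> 1" and C: "C \<ge> 1"
    \<comment> \<open>f_i twice differentiable with gradient gi i and Hessian Hi i, (L0,L1)-smooth\<close>
    and grad: "\<And>i x. i < N \<Longrightarrow> (fi i has_derivative (\<lambda>h. gi i x \<bullet> h)) (at x)"
    and hess: "\<And>i x. i < N \<Longrightarrow> (gi i has_derivative Hi i x) (at x)"
    and smooth: "\<And>i x. i < N \<Longrightarrow> onorm (Hi i x) \<le> L0 + L1 * norm (gi i x)"
    \<comment> \<open>stochastic gradients: unbiased, bounded noise; jointly measurable\<close>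
    and D: "\<And>i. i < N \<Longrightarrow> prob_space (D i)"
    and GF_meas: "\<And>i. i < N \<Longrightarrow> (\<lambda>(x, s). GF i x s) \<in> borel_measurable (borel \<Otimes>\<^sub>M D i)"
    and unbiased: "\<And>i x. i < N \<Longrightarrow> integrable (D i) (GF i x) \<and> (\<integral>s. GF i x s \<partial>D i) = gi i x"
    and noise: "\<And>i x. i < N \<Longrightarrow> (AE s in D i. norm (GF i x s - gi i x) \<le> \<sigma>)"
    \<comment> \<open>heterogeneity, with nabla f = (1/N) sum_i nabla f_i\<close>
    and hetero: "\<And>i x. i < N \<Longrightarrow>
        norm (gi i x) \<le> \<kappa> + \<rho> * norm ((1 / real N) *\<^sub>R (\<Sum>j<N. gi j x))"
    \<comment> \<open>samples: all independent, each drawn from D i\<close>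
    and indep: "prob_space.indep_vars M (\<lambda>k. D (sample_client k)) (sample_var \<xi>t \<xi>)
        {k. sample_client k < N}"
    and distr_t: "\<And>i r. i < N \<Longrightarrow> distr M (D i) (\<xi>t i r) = D i"
    and distr_s: "\<And>i t. i < N \<Longrightarrow> distr M (D i) (\<xi> i t) = D i"
    \<comment> \<open>step size conditions\<close>
    and cond1: "2 * \<eta> * real I * ((1 + exp C - (exp C - 1) / C) * L0 + ((exp C - 1) / C) * L1 * \<kappa>
        + ((exp C - 1) / C) * L1 * \<rho> * (\<sigma> + \<gamma> / \<eta>)) \<le> 1"
    and cond2: "max (2 * \<eta> * real I * (2 * \<sigma> + \<gamma> / \<eta>)) (\<gamma> * real I) \<le> C / L1"
  shows "\<forall>r i. i < N \<longrightarrow>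
    (AE \<omega> in M. \<forall>x. norm (x - xbar N I \<eta> \<gamma> GF x0 (\<lambda>i r. \<xi>t i r \<omega>) (\<lambda>i t. \<xi> i t \<omega>) r)
          \<le> 2 * \<eta> * real I * (2 * \<sigma> + \<gamma> / \<eta>) \<longrightarrow>
        indicator (event_A M N I \<eta> \<gamma> GF x0 \<xi>t \<xi> r) \<omega> * onorm (Hi i x)
          \<le> L0 + L1 * (\<kappa> + (\<rho> + 1) * (\<gamma> / \<eta> + 2 * \<sigma>)))"
proof (intro allI impI)
  fix r i assume i: "i < N"
  interpret prob_space M by (rule M)
  define X where "X \<omega> = xbar N I \<eta> \<gamma> GF x0 (\<lambda>i r. \<xi>t i r \<omega>) (\<lambda>i t. \<xi> i t \<omega>) r" for \<omega>
  have radius: "L1 * (2 * \<eta> * real I * (2 * \<sigma> + \<gamma> / \<eta>)) \<le> C"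
    using cond2 L1 by (simp add: field_simps)
  have "continuous_on UNIV (gi j)" if "j < N" for j
    using hess[OF that] by (blast intro: continuous_at_imp_continuous_on has_derivative_continuous)
  from AE_noise_bound_at_xbar[OF GF_meas indep distr_t this noise]
  have "AE \<omega> in M. \<forall>j<N. norm (GF j (X \<omega>) (\<xi>t j r \<omega>) - gi j (X \<omega>)) \<le> \<sigma>"
    unfolding X_def .
  then show "AE \<omega> in M. \<forall>x. norm (x - X \<omega>) \<le> 2 * \<eta> * real I * (2 * \<sigma> + \<gamma> / \<eta>) \<longrightarrow>
      indicator (event_A M N I \<eta> \<gamma> GF x0 \<xi>t \<xi> r) \<omega> * onorm (Hi i x)
        \<le> L0 + L1 * (\<kappa> + (\<rho> + 1) * (\<gamma> / \<eta> + 2 * \<sigma>))"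
  proof (rule eventually_mono, intro allI impI)
    fix \<omega> x
    assume noise_\<omega>: "\<forall>j<N. norm (GF j (X \<omega>) (\<xi>t j r \<omega>) - gi j (X \<omega>)) \<le> \<sigma>"
      and near: "norm (x - X \<omega>) \<le> 2 * \<eta> * real I * (2 * \<sigma> + \<gamma> / \<eta>)"
    show "indicator (event_A M N I \<eta> \<gamma> GF x0 \<xi>t \<xi> r) \<omega> * onorm (Hi i x)
        \<le> L0 + L1 * (\<kappa> + (\<rho> + 1) * (\<gamma> / \<eta> + 2 * \<sigma>))"
    proof (cases "\<omega> \<in> event_A M N I \<eta> \<gamma> GF x0 \<xi>t \<xi> r")
      case True
      then have "norm ((1 / real N) *\<^sub>R (\<Sum>j<N. gi j (X \<omega>))) \<le> \<gamma> / \<eta> + \<sigma>"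
        using norm_mean_le_norm_mean_add[of N "\<lambda>j. GF j (X \<omega>) (\<xi>t j r \<omega>)" "\<lambda>j. gi j (X \<omega>)"] noise_\<omega> N
        by (force simp: event_A_def Gavg_def X_def)
      then have "\<rho> * norm ((1 / real N) *\<^sub>R (\<Sum>j<N. gi j (X \<omega>))) \<le> \<rho> * (\<gamma> / \<eta> + \<sigma>)"
        using rho by (intro mult_left_mono) auto
      then have "norm (gi i (X \<omega>)) \<le> \<kappa> + \<rho> * (\<gamma> / \<eta> + \<sigma>)"
        using hetero[OF i, of "X \<omega>"] by linarith
      then show ?thesis
        using hessian_bound_near_center[OF hess[OF i] smooth[OF i] L0 L1 _ eta _ sigma _ _ cond1 radius near]
          True C gamma rho by simp
    next
      case False
      then show ?thesis
        using L0 L1 kappa rho eta gamma sigma by simp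
    qed
  qed
qed

end
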